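(* Let $M=p_1^{n_1}\cdots p_K^{n_K}$ with distinct primes and $n_\nu\in\mathbb{N}$, let $A\oplus B=\mathbb{Z}_M$, and fix $i$. Assume $0\in B$, and that $a_0\neq a_1\in A$ satisfy $p_i^{n_i}\mid a_0-a_1$. Assume further that $a_\mu*F_i$ splits with parity $(B,A)$ for $\mu=0,1$. Then $\Sigma_A(a_0*F_i)$ and $\Sigma_A(a_1*F_i)$ are disjoint.
   Context: $A\oplus B=\mathbb{Z}_M$ means every element of $\mathbb{Z}_M$ is uniquely $a+b$ with $a\in A$, $b\in B$. $F_i=\{0,M/p_i,\dots,(p_i-1)M/p_i\}$, $x*F_i=\{x+f:f\in F_i\}$. For $Z\subset\mathbb{Z}_M$, $\Sigma_A(Z)=\{a\in A: a+b\in Z\text{ for some }b\in B\}$, $\Sigma_B(Z)=\{b\in B: a+b\in Z\text{ for some }a\in A\}$. A fiber $Z=x*F_i$ splits with parity $(B,A)$ if $p_i^{n_i}\mid b-b'$ for all $b,b'\in\Sigma_B(Z)$ and, for all distinct $a,a'\in\Sigma_A(Z)$, $p_i^{n_i-1}\mid a-a'$ but $p_i^{n_i}\nmid a-a'$. *)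

theory Defs
  imports "HOL-Computational_Algebra.Primes"
begin

text \<open>Z_M is modelled by the residues {0..<M} (naturals), addition mod M.\<close>

definition is_tiling :: "nat \<Rightarrow> nat set \<Rightarrow> nat set \<Rightarrow> bool" where
  "is_tiling M A B \<longleftrightarrow> A \<subseteq> {0..<M} \<and> B \<subseteq> {0..<M} \<and>
     (\<forall>x<M. \<exists>!ab. fst ab \<in> A \<and> snd ab \<in> B \<and> (fst ab + snd ab) mod M = x)"

text \<open>The fiber x * F_i = {x + f : f in F_i}, F_i = {0, M/p, ..., (p-1)M/p}.\<close>
definition fiber :: "nat \<Rightarrow> nat \<Rightarrow> nat \<Rightarrow> nat set" where
  "fiber M p x = {(x + k * (M div p)) mod M | k. k < p}"

definition SigmaA :: "nat \<Rightarrow> nat set \<Rightarrow> nat set \<Rightarrow> nat set \<Rightarrow> nat set" where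
  "SigmaA M A B Z = {a \<in> A. \<exists>b\<in>B. (a + b) mod M \<in> Z}"

definition SigmaB :: "nat \<Rightarrow> nat set \<Rightarrow> nat set \<Rightarrow> nat set \<Rightarrow> nat set" where
  "SigmaB M A B Z = {b \<in> B. \<exists>a\<in>A. (a + b) mod M \<in> Z}"

definition splits_BA :: "nat \<Rightarrow> nat set \<Rightarrow> nat set \<Rightarrow> nat \<Rightarrow> nat \<Rightarrow> nat set \<Rightarrow> bool" where
  "splits_BA M A B p n Z \<longleftrightarrow>
     (\<forall>b\<in>SigmaB M A B Z. \<forall>b'\<in>SigmaB M A B Z. int (p ^ n) dvd int b - int b') \<and>
     (\<forall>a\<in>SigmaA M A B Z. \<forall>a'\<in>SigmaA M A B Z. a \<noteq> a' \<longrightarrow>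
        int (p ^ (n - 1)) dvd int a - int a' \<and> \<not> int (p ^ n) dvd int a - int a')"

end

theory Submission
  imports Defs "HOL-Number_Theory.Cong"
begin

text \<open>
  Write \<open>M = p\<^sup>N Q\<close> with \<open>p = p\<^sub>i\<close> coprime to \<open>Q\<close> and \<open>D = M / p = p\<^sup>N\<^sup>-\<^sup>1 Q\<close>; the fiber
  through \<open>x\<close> consists of the residues \<open>x + k D\<close> with \<open>k < p\<close>, which are pairwise
  incongruent modulo \<open>p\<^sup>N\<close>. As \<open>0 \<in> B\<close> lies in both \<open>\<Sigma>\<^sub>B\<close>, the splitting puts every element
  of each \<open>\<Sigma>\<^sub>B\<close> into \<open>p\<^sup>N \<int>\<close>. A common \<open>a\<close> would give \<open>a + b \<equiv> a\<^sub>0 + k D\<close> and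
  \<open>a + b' \<equiv> a\<^sub>1 + k' D\<close>; modulo \<open>p\<^sup>N\<close> this forces \<open>k = k'\<close> since \<open>a\<^sub>0 \<equiv> a\<^sub>1\<close>, hence
  \<open>a\<^sub>0 + b' \<equiv> a\<^sub>1 + b (mod M)\<close>, and uniqueness of the decomposition in \<open>A \<oplus> B\<close> gives
  \<open>a\<^sub>0 = a\<^sub>1\<close>.
\<close>

lemma prod_prime_powers_remove:
  fixes p n :: "'i \<Rightarrow> nat"
  assumes "finite I" "i \<in> I" "\<forall>\<nu>\<in>I. prime (p \<nu>)" "inj_on p I"
  shows "(\<Prod>\<nu>\<in>I. p \<nu> ^ n \<nu>) = p i ^ n i * (\<Prod>\<nu>\<in>I - {i}. p \<nu> ^ n \<nu>)"
    and "coprime (p i) (\<Prod>\<nu>\<in>I - {i}. p \<nu> ^ n \<nu>)"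
proof -
  show "(\<Prod>\<nu>\<in>I. p \<nu> ^ n \<nu>) = p i ^ n i * (\<Prod>\<nu>\<in>I - {i}. p \<nu> ^ n \<nu>)"
    using assms(1,2) by (rule prod.remove)
  show "coprime (p i) (\<Prod>\<nu>\<in>I - {i}. p \<nu> ^ n \<nu>)"
  proof (rule prod_coprime_right)
    fix j assume j: "j \<in> I - {i}"
    then have "p j \<noteq> p i"
      using assms(2,4) by (auto dest: inj_onD)
    then have "coprime (p i) (p j)"
      using assms(2,3) j by (intro primes_coprime) auto
    then show "coprime (p i) (p j ^ n j)"
      by simp
  qed
qed

lemma is_tiling_unique_left:
  assumes "is_tiling M A B" "x \<in> A" "y \<in> A" "u \<in> B" "v \<in> B"
    and "[x + u = y + v] (mod M)"
  shows "x = y"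
proof -
  have "x < M"
    using assms(1,2) by (auto simp: is_tiling_def)
  then have "(x + u) mod M < M"
    by simp
  then have "\<exists>!ab. fst ab \<in> A \<and> snd ab \<in> B \<and> (fst ab + snd ab) mod M = (x + u) mod M"
    using assms(1) by (simp add: is_tiling_def)
  moreover have "(y + v) mod M = (x + u) mod M"
    using assms(6) by (simp add: cong_def)
  ultimately have "(x, u) = (y, v)"
    using assms(2-5) by (metis (no_types, lifting) fst_conv snd_conv)
  then show ?thesis
    by simp
qed

lemma mem_fiber_self:
  assumes "0 < p" "x < M"
  shows "x \<in> fiber M p x"
  using assms by (auto simp: fiber_def intro!: exI[of _ 0])

lemma zero_mem_SigmaB_fiber:
  assumes "0 \<in> B" "x \<in> A" "x < M" "0 < p"
  shows "0 \<in> SigmaB M A B (fiber M p x)"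
  using assms mem_fiber_self[of p x M] by (force simp: SigmaB_def)

lemma SigmaA_fiberE:
  assumes "a \<in> SigmaA M A B (fiber M p x)"
  obtains b k where "b \<in> B" "b \<in> SigmaB M A B (fiber M p x)" "k < p"
    "[a + b = x + k * (M div p)] (mod M)"
proof -
  obtain b where b: "b \<in> B" "(a + b) mod M \<in> fiber M p x" and "a \<in> A"
    using assms by (auto simp: SigmaA_def)
  then have "b \<in> SigmaB M A B (fiber M p x)"
    by (auto simp: SigmaB_def)
  moreover obtain k where "k < p" "(a + b) mod M = (x + k * (M div p)) mod M"
    using b(2) by (auto simp: fiber_def)
  ultimately show thesis
    using that b(1) by (simp add: cong_def)
qed

lemma splits_BA_dvd_SigmaB:
  assumes "splits_BA M A B p n Z" "0 \<in> SigmaB M A B Z" "b \<in> SigmaB M A B Z"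
  shows "p ^ n dvd b"
proof -
  have "int (p ^ n) dvd int b - int 0"
    using assms by (simp only: splits_BA_def)
  then show ?thesis
    by (simp flip: of_nat_power)
qed

lemma fiber_offsets_incongruent:
  fixes P Q N k k' :: nat
  assumes "coprime P Q" "N \<ge> 1" "k < P" "k' < P"
    and "[k * (P ^ (N - 1) * Q) = k' * (P ^ (N - 1) * Q)] (mod P ^ N)"
  shows "k = k'"
proof -
  have PN: "P ^ N = P ^ (N - 1) * P"
    using assms(2) by (metis Suc_diff_le diff_Suc_1 power_Suc2)
  have "(P ^ (N - 1) * (k * Q)) mod (P ^ (N - 1) * P)
      = (P ^ (N - 1) * (k' * Q)) mod (P ^ (N - 1) * P)"
    using assms(5) by (simp add: cong_def PN ac_simps)
  then have "[k * Q = k' * Q] (mod P)"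
    using assms(3) by (simp add: cong_def flip: mult_mod_right)
  then have "[k = k'] (mod P)"
    using assms(1) by (simp add: cong_mult_rcancel_nat coprime_commute)
  then show ?thesis
    using assms(3,4) by (rule cong_less_modulus_unique_nat)
qed

lemma cong_offsets_of_common_point:
  fixes m q :: nat
  assumes "[a + b = x + c] (mod m)" "[a + b' = x' + c'] (mod m)"
    and "q dvd m" "q dvd b" "q dvd b'" "[x = x'] (mod q)"
  shows "[c = c'] (mod q)"
proof -
  have "[b = 0] (mod q)" "[b' = 0] (mod q)"
    using assms(4,5) by (simp_all add: cong_0_iff)
  then have "[a + 0 = x + c] (mod q)" "[a + 0 = x' + c'] (mod q)"
    using cong_dvd_modulus_nat[OF assms(1,3)] cong_dvd_modulus_nat[OF assms(2,3)]
    by (metis cong_add cong_refl cong_sym cong_trans)+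
  moreover have "[x' + c' = x + c'] (mod q)"
    using cong_add[OF cong_sym[OF assms(6)] cong_refl] .
  ultimately have "[x + c = x + c'] (mod q)"
    by (metis cong_sym cong_trans)
  then show ?thesis
    by (simp add: cong_add_lcancel_nat)
qed

lemma SigmaA_fibers_disjoint:
  fixes M P N Q :: nat
  assumes M: "M = P ^ N * Q" and P: "prime P" "coprime P Q" "N \<ge> 1"
    and tiling: "is_tiling M A B" and "0 \<in> B"
    and a0: "a0 \<in> A" and a1: "a1 \<in> A" and "a0 \<noteq> a1" and "[a0 = a1] (mod P ^ N)"
    and split0: "splits_BA M A B P N (fiber M P a0)"
    and split1: "splits_BA M A B P N (fiber M P a1)"
  shows "SigmaA M A B (fiber M P a0) \<inter> SigmaA M A B (fiber M P a1) = {}"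
proof (rule ccontr)
  assume "SigmaA M A B (fiber M P a0) \<inter> SigmaA M A B (fiber M P a1) \<noteq> {}"
  then obtain a where "a \<in> SigmaA M A B (fiber M P a0)" "a \<in> SigmaA M A B (fiber M P a1)"
    by blast
  define D where "D = P ^ (N - 1) * Q"
  have "M = P * D"
    using \<open>N \<ge> 1\<close> by (cases N) (simp_all add: M D_def)
  then have "M div P = D"
    using P(1) by (simp add: prime_gt_0_nat)
  obtain b k where b: "b \<in> B" "b \<in> SigmaB M A B (fiber M P a0)" "k < P"
      and eq0: "[a + b = a0 + k * D] (mod M)"
    using \<open>a \<in> SigmaA M A B (fiber M P a0)\<close> \<open>M div P = D\<close> by (elim SigmaA_fiberE) simp
  obtain b' k' where b': "b' \<in> B" "b' \<in> SigmaB M A B (fiber M P a1)" "k' < P"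
      and eq1: "[a + b' = a1 + k' * D] (mod M)"
    using \<open>a \<in> SigmaA M A B (fiber M P a1)\<close> \<open>M div P = D\<close> by (elim SigmaA_fiberE) simp
  have "a0 < M" "a1 < M" "0 < P"
    using tiling a0 a1 P(1) by (auto simp: is_tiling_def prime_gt_0_nat)
  then have zero0: "0 \<in> SigmaB M A B (fiber M P a0)" and zero1: "0 \<in> SigmaB M A B (fiber M P a1)"
    using \<open>0 \<in> B\<close> a0 a1 by (simp_all add: zero_mem_SigmaB_fiber)
  have "P ^ N dvd b" "P ^ N dvd b'"
    using splits_BA_dvd_SigmaB split0 zero0 b(2) split1 zero1 b'(2) by blast+
  then have "[k * D = k' * D] (mod P ^ N)"
    using cong_offsets_of_common_point[OF eq0 eq1 _ _ _ \<open>[a0 = a1] (mod P ^ N)\<close>]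
    by (simp add: M)
  then have "k = k'"
    unfolding D_def by (rule fiber_offsets_incongruent[OF P(2,3) b(3) b'(3)])
  have "[a0 + b' + k * D = a + b + b'] (mod M)"
    using cong_sym[OF cong_add[OF eq0 cong_refl[of b']]] by (simp add: ac_simps)
  also have "[a + b + b' = a1 + b + k * D] (mod M)"
    using cong_add[OF eq1 cong_refl[of b]] \<open>k = k'\<close> by (simp add: ac_simps)
  finally have "[a0 + b' = a1 + b] (mod M)"
    by (simp add: cong_add_rcancel_nat)
  then have "a0 = a1"
    by (rule is_tiling_unique_left[OF tiling a0 a1 b'(1) b(1)])
  with \<open>a0 \<noteq> a1\<close> show False ..
qed

theorem lemma4p7:
  fixes M K i :: nat and p n :: "nat \<Rightarrow> nat" and A B :: "nat set" and a0 a1 :: nat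
  assumes primes: "\<forall>\<nu>\<in>{1..K}. prime (p \<nu>)"
    and distinct: "inj_on p {1..K}"
    and exps: "\<forall>\<nu>\<in>{1..K}. n \<nu> \<ge> 1"
    and M_def: "M = (\<Prod>\<nu>\<in>{1..K}. p \<nu> ^ n \<nu>)"
    and i: "i \<in> {1..K}"
    and tiling: "is_tiling M A B"
    and zeroB: "0 \<in> B"
    and a0: "a0 \<in> A" and a1: "a1 \<in> A" and ne: "a0 \<noteq> a1"
    and dvd01: "int (p i ^ n i) dvd int a0 - int a1"
    and split0: "splits_BA M A B (p i) (n i) (fiber M (p i) a0)"
    and split1: "splits_BA M A B (p i) (n i) (fiber M (p i) a1)"
  shows "SigmaA M A B (fiber M (p i) a0) \<inter> SigmaA M A B (fiber M (p i) a1) = {}"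
proof (rule SigmaA_fibers_disjoint)
  show "M = p i ^ n i * (\<Prod>\<nu>\<in>{1..K} - {i}. p \<nu> ^ n \<nu>)"
    and "coprime (p i) (\<Prod>\<nu>\<in>{1..K} - {i}. p \<nu> ^ n \<nu>)"
    using prod_prime_powers_remove[of "{1..K}" i p n] i primes distinct M_def by auto
  show "[a0 = a1] (mod p i ^ n i)"
    using dvd01 by (simp add: cong_iff_dvd_diff flip: cong_int_iff)
qed (use primes exps i tiling zeroB a0 a1 ne split0 split1 in auto)

end
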